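(* Let $\theta(q,x):=\sum_{j=0}^{\infty}q^{j(j+1)/2}x^j$. For every fixed $q\in(0,1)$, the function $x\mapsto\theta(q,x)$ has no real zeros $x\geq -5$.
   Context: For $q\in(0,1)$ the series defining $\theta(q,x)$ converges for all $x\in\mathbb{C}$. *)

theory Defs
  imports "HOL-Analysis.Analysis"
begin

text \<open>Partial theta function theta(q,x) = sum over j of q^(j(j+1)/2) x^j (real arguments).
  The exponent j(j+1)/2 is a natural number, so nat division is exact.\<close>
definition theta :: "real \<Rightarrow> real \<Rightarrow> real" where
  "theta q x = (\<Sum>j. q ^ (j * (j + 1) div 2) * x ^ j)"

end

theory Submission
  imports Defs
begin

text \<open>For \<open>x \<ge> 0\<close> all terms are nonnegative, so \<open>theta q x \<ge> 1\<close>. Write \<open>x = -y\<close>. If \<open>q y \<le> 1\<close>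
  the series is alternating with decreasing terms, and its partial sum
  \<open>1 - q y + q\<^sup>3 y\<^sup>2 - q\<^sup>6 y\<^sup>3\<close> is already positive. If \<open>q y > 1\<close>, then \<open>y \<ge> 1\<close> and \<open>q > 1/5\<close>, and the
  Jacobi triple product
    \<open>theta q x + theta q (1 / x) / x = (q; q)\<^sub>\<infinity> \<Prod>\<^sub>i (1 + q\<^sup>i / x) (1 + x q\<^sup>i\<^sup>+\<^sup>1)\<close>
  at \<open>x = -y\<close> bounds \<open>\<bar>theta q (-y) - theta q (-1/y) / y\<bar>\<close> by every partial product of the moduli
  of the factors, each of which is at most \<open>1\<close> for \<open>y \<le> 5\<close>. Since \<open>theta q (-1/y) / y \<ge> (1 - q/y) / y\<close>,
  it suffices to find one partial product below \<open>(1 - q/y) / y\<close>. For \<open>1/5 \<le> q \<le> 9/10\<close> this is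
  checked on finitely many boxes in the \<open>(q, y)\<close>-plane, bounding each factor by its extreme values
  on the box. For \<open>q \<ge> 9/10\<close> the partial product up to the last \<open>n\<close> with \<open>q\<^sup>n \<ge> 1/5\<close> works.\<close>

section \<open>Elementary bounds for the partial theta function\<close>

definition triangular :: "nat \<Rightarrow> nat" where
  "triangular j = j * (j + 1) div 2"

lemma triangular_0 [simp]: "triangular 0 = 0"
  by (simp add: triangular_def)

lemma triangular_Suc: "triangular (Suc j) = triangular j + Suc j"
proof -
  have "Suc j * (Suc j + 1) = j * (j + 1) + 2 * Suc j"
    by (simp add: algebra_simps)
  then show ?thesis
    unfolding triangular_def by simp
qed

lemma two_triangular: "2 * triangular n = n * (n + 1)"
  by (induction n) (simp_all add: triangular_Suc algebra_simps)

lemma sum_lessThan_plus_eq_triangular: "(\<Sum>i<n. i) + n = triangular n"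
  by (induction n) (simp_all add: triangular_Suc)

lemma theta_eq_suminf: "theta q x = (\<Sum>j. q ^ triangular j * x ^ j)"
  by (simp add: theta_def triangular_def)

lemma summable_norm_theta_terms:
  fixes q x :: real
  assumes q: "0 < q" "q < 1"
  shows "summable (\<lambda>j. norm (q ^ triangular j * x ^ j))"
proof -
  have "\<exists>N. q ^ N < 1 / (2 * (\<bar>x\<bar> + 1))"
    by (rule real_arch_pow_inv) (use q in auto)
  then obtain N where N: "q ^ N < 1 / (2 * (\<bar>x\<bar> + 1))" ..
  show ?thesis
  proof (rule summable_ratio_test[of "1/2" N])
    fix n
    assume n: "N \<le> n"
    have "q ^ Suc n \<le> q ^ N"
      using q n by (intro power_decreasing) auto
    have "q ^ Suc n * \<bar>x\<bar> \<le> q ^ Suc n * (\<bar>x\<bar> + 1)"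
      using q by simp
    also have "\<dots> \<le> 1 / (2 * (\<bar>x\<bar> + 1)) * (\<bar>x\<bar> + 1)"
      using \<open>q ^ Suc n \<le> q ^ N\<close> N by (intro mult_right_mono) auto
    also have "\<dots> = 1/2"
      by simp
    finally have ratio: "q ^ Suc n * \<bar>x\<bar> \<le> 1/2" .
    have "norm (norm (q ^ triangular (Suc n) * x ^ Suc n))
        = (q ^ Suc n * \<bar>x\<bar>) * norm (q ^ triangular n * x ^ n)"
      using q unfolding triangular_Suc power_add by (simp add: abs_mult power_abs)
    also have "\<dots> \<le> 1/2 * norm (q ^ triangular n * x ^ n)"
      by (intro mult_right_mono ratio) auto
    finally show "norm (norm (q ^ triangular (Suc n) * x ^ Suc n))
        \<le> 1/2 * norm (norm (q ^ triangular n * x ^ n))"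
      by simp
  qed simp
qed

lemma summable_theta_terms:
  fixes q x :: real
  assumes "0 < q" "q < 1"
  shows "summable (\<lambda>j. q ^ triangular j * x ^ j)"
  using summable_norm_cancel[OF summable_norm_theta_terms[OF assms]] .

lemma theta_ge_one:
  fixes q x :: real
  assumes q: "0 < q" "q < 1" and x: "0 \<le> x"
  shows "1 \<le> theta q x"
proof -
  have "(\<Sum>i<1. q ^ triangular i * x ^ i) \<le> (\<Sum>j. q ^ triangular j * x ^ j)"
    by (rule sum_le_suminf[OF summable_theta_terms[OF q]]) (use q x in auto)
  then show ?thesis
    by (simp add: theta_eq_suminf)
qed

lemma theta_minus_ge_partial_sum:
  fixes q y :: real
  assumes q: "0 < q" "q < 1" and y: "0 \<le> y" "q * y \<le> 1"
  shows "(\<Sum>i<2 * k. (-1) ^ i * (q ^ triangular i * y ^ i)) \<le> theta q (-y)"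
proof -
  define a where "a j = q ^ triangular j * y ^ j" for j
  have theta_alt: "theta q (-y) = (\<Sum>j. (-1) ^ j * a j)"
    unfolding theta_eq_suminf a_def
    by (intro arg_cong[where f = suminf] ext) (subst power_minus, simp add: mult.left_commute)
  have a_nonneg: "0 \<le> a j" for j
    using q y by (simp add: a_def)
  have a_decreasing: "a (Suc j) \<le> a j" for j
  proof -
    have "q ^ Suc j \<le> q"
      using q by (simp add: power_le_one mult_left_le)
    then have "q ^ Suc j * y \<le> q * y"
      using y by (intro mult_right_mono)
    then have "q ^ Suc j * y \<le> 1"
      using y by linarith
    then have "a j * (q ^ Suc j * y) \<le> a j"
      using a_nonneg by (simp add: mult_left_le)
    moreover have "a (Suc j) = a j * (q ^ Suc j * y)"
      unfolding a_def triangular_Suc power_add by simp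
    ultimately show ?thesis
      by simp
  qed
  have "a \<longlonglongrightarrow> 0"
    unfolding a_def by (rule summable_LIMSEQ_zero[OF summable_theta_terms[OF q]])
  from summable_Leibniz'(2)[OF this a_nonneg a_decreasing, of k]
  show ?thesis
    unfolding theta_alt a_def .
qed

lemma theta_minus_pos_if_small:
  fixes q y :: real
  assumes q: "0 < q" "q < 1" and y: "0 \<le> y" "q * y \<le> 1"
  shows "0 < theta q (-y)"
proof -
  have "q ^ 3 * y = q ^ 2 * (q * y)"
    by (simp add: power_def algebra_simps eval_nat_numeral)
  also have "\<dots> \<le> q ^ 2"
    using y q by (simp add: mult_left_le)
  also have "\<dots> < 1"
    using q by (simp add: power_less_one_iff)
  finally have "q ^ 3 * y < 1" .
  have "0 < 1 - q * y + q ^ 3 * y ^ 2 * (1 - q ^ 3 * y)"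
  proof (cases "y = 0")
    case False
    then have "0 < q ^ 3 * y ^ 2 * (1 - q ^ 3 * y)"
      using q \<open>q ^ 3 * y < 1\<close> by simp
    then show ?thesis
      using y by linarith
  qed simp
  also have "\<dots> = 1 - q * y + q ^ 3 * y ^ 2 - q ^ 6 * y ^ 3"
    by (simp add: algebra_simps eval_nat_numeral)
  also have "\<dots> = (\<Sum>i<2 * 2. (-1) ^ i * (q ^ triangular i * y ^ i))"
    by (simp add: eval_nat_numeral triangular_Suc)
  also have "\<dots> \<le> theta q (-y)"
    by (rule theta_minus_ge_partial_sum[OF q y])
  finally show ?thesis .
qed

lemma theta_minus_inverse_ge:
  fixes q y :: real
  assumes q: "0 < q" "q < 1" and y: "1 \<le> y"
  shows "1 - q / y \<le> theta q (-(1 / y))"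
proof -
  have "q * (1 / y) \<le> 1"
    using q y by (simp add: field_simps)
  then have "(\<Sum>i<2 * 1. (-1) ^ i * (q ^ triangular i * (1 / y) ^ i)) \<le> theta q (-(1 / y))"
    using y by (intro theta_minus_ge_partial_sum[OF q]) auto
  then show ?thesis
    by (simp add: numeral_2_eq_2 triangular_def)
qed

section \<open>Gaussian binomials and the Jacobi triple product\<close>

definition q_pochhammer :: "'a::comm_ring_1 \<Rightarrow> nat \<Rightarrow> 'a" where
  "q_pochhammer q n = (\<Prod>i<n. 1 - q ^ Suc i)"

lemma q_pochhammer_0 [simp]: "q_pochhammer q 0 = 1"
  by (simp add: q_pochhammer_def)

lemma q_pochhammer_Suc: "q_pochhammer q (Suc n) = q_pochhammer q n * (1 - q ^ Suc n)"
  by (simp add: q_pochhammer_def)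

lemma q_pochhammer_pos:
  fixes q :: real
  assumes "0 < q" "q < 1"
  shows "0 < q_pochhammer q n"
  unfolding q_pochhammer_def
  using power_Suc_less_one[OF assms] by (intro prod_pos) auto

lemma q_pochhammer_antimono:
  fixes q :: real
  assumes q: "0 < q" "q < 1" and "m \<le> n"
  shows "q_pochhammer q n \<le> q_pochhammer q m"
  using \<open>m \<le> n\<close>
proof (induction n rule: dec_induct)
  case (step n)
  have "q_pochhammer q n * (1 - q ^ Suc n) \<le> q_pochhammer q n"
    using q q_pochhammer_pos[OF q, of n] by (simp add: mult_left_le)
  then show ?case
    using step by (simp add: q_pochhammer_Suc)
qed simp

lemma q_pochhammer_tendsto_pos:
  fixes q :: real
  assumes q: "0 < q" "q < 1"
  obtains L where "q_pochhammer q \<longlonglongrightarrow> L" "0 < L" "\<And>n. L \<le> q_pochhammer q n"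
proof -
  define f where "f i = 1 - q ^ Suc i" for i
  have f_nonzero: "f i \<noteq> 0" for i
    using power_Suc_less_one[OF q, of i] by (simp add: f_def)
  have "summable (\<lambda>i. q * q ^ i)"
    using q by (intro summable_mult summable_geometric) simp
  then have "summable (\<lambda>i. norm (f i - 1))"
    using q by (simp add: f_def)
  then have "convergent_prod f"
    by (intro abs_convergent_prod_imp_convergent_prod summable_imp_abs_convergent_prod)
  then obtain L where L: "(\<lambda>n. \<Prod>i\<le>n. f i) \<longlonglongrightarrow> L" "L \<noteq> 0"
    using convergent_prod_iff_nz_lim[of f] f_nonzero by blast
  have "(\<lambda>n. q_pochhammer q (Suc n)) \<longlonglongrightarrow> L"
    using L(1) unfolding q_pochhammer_def f_def lessThan_Suc_atMost .
  then have lim: "q_pochhammer q \<longlonglongrightarrow> L"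
    by (rule LIMSEQ_imp_Suc)
  have "decseq (q_pochhammer q)"
    unfolding decseq_def using q_pochhammer_antimono[OF q] by blast
  then have le: "L \<le> q_pochhammer q n" for n
    by (rule decseq_ge[OF _ lim])
  have "0 \<le> L"
    using LIMSEQ_le_const[OF lim] q_pochhammer_pos[OF q] less_imp_le by blast
  with L(2) have "0 < L"
    by simp
  with lim le show ?thesis
    using that by blast
qed

fun gauss_binomial :: "'a::comm_ring_1 \<Rightarrow> nat \<Rightarrow> nat \<Rightarrow> 'a" where
  "gauss_binomial q N 0 = 1"
| "gauss_binomial q 0 (Suc j) = 0"
| "gauss_binomial q (Suc N) (Suc j) = gauss_binomial q N (Suc j) + q ^ (N - j) * gauss_binomial q N j"

lemma gauss_binomial_eq_0: "N < j \<Longrightarrow> gauss_binomial q N j = 0"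
proof (induction N arbitrary: j)
  case 0
  then show ?case
    by (cases j) auto
next
  case (Suc N)
  then obtain k where "j = Suc k" "N < k"
    by (cases j) auto
  then show ?case
    using Suc by simp
qed

lemma gauss_binomial_mult_q_pochhammer:
  "j \<le> N \<Longrightarrow> gauss_binomial q N j * q_pochhammer q j * q_pochhammer q (N - j) = q_pochhammer q N"
proof (induction N arbitrary: j)
  case 0
  then show ?case by simp
next
  case (Suc N)
  show ?case
  proof (cases j)
    case 0
    then show ?thesis by simp
  next
    case (Suc k)
    consider "k = N" | "Suc k \<le> N"
      using Suc \<open>j \<le> Suc N\<close> by linarith
    then show ?thesis
    proof cases
      case 1
      have "gauss_binomial q N N * q_pochhammer q N = q_pochhammer q N"
        using Suc.IH[of N] by simp
      then show ?thesis
        using 1 Suc by (simp add: gauss_binomial_eq_0 q_pochhammer_Suc flip: mult.assoc)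
    next
      case 2
      have split: "q_pochhammer q (N - k) = q_pochhammer q (N - Suc k) * (1 - q ^ (N - k))"
        using 2 by (metis Suc_diff_Suc Suc_le_lessD q_pochhammer_Suc)
      have "N - k + Suc k = Suc N"
        using 2 by simp
      then have exp: "q ^ (N - k) * q ^ Suc k = q ^ Suc N"
        by (metis power_add)
      have IH: "gauss_binomial q N (Suc k) * q_pochhammer q (Suc k) * q_pochhammer q (N - Suc k)
          = q_pochhammer q N"
        "gauss_binomial q N k * q_pochhammer q k * q_pochhammer q (N - k) = q_pochhammer q N"
        using Suc.IH 2 by simp_all
      have "gauss_binomial q (Suc N) j * q_pochhammer q j * q_pochhammer q (Suc N - j)
          = (gauss_binomial q N (Suc k) * q_pochhammer q (Suc k) * q_pochhammer q (N - Suc k))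
              * (1 - q ^ (N - k))
            + q ^ (N - k) * (gauss_binomial q N k * q_pochhammer q k * q_pochhammer q (N - k))
              * (1 - q ^ Suc k)"
        using Suc by (simp add: split q_pochhammer_Suc algebra_simps)
      also have "\<dots> = q_pochhammer q N * (1 - q ^ (N - k) * q ^ Suc k)"
        unfolding IH by (simp add: algebra_simps)
      also have "\<dots> = q_pochhammer q (Suc N)"
        unfolding exp q_pochhammer_Suc ..
      finally show ?thesis .
    qed
  qed
qed

lemma gauss_binomial_eq_quotient:
  fixes q :: real
  assumes "0 < q" "q < 1" "j \<le> N"
  shows "gauss_binomial q N j = q_pochhammer q N / (q_pochhammer q j * q_pochhammer q (N - j))"
proof -
  have "0 < q_pochhammer q j * q_pochhammer q (N - j)"
    using q_pochhammer_pos[OF assms(1,2)] by simp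
  moreover have "gauss_binomial q N j * (q_pochhammer q j * q_pochhammer q (N - j)) = q_pochhammer q N"
    using gauss_binomial_mult_q_pochhammer[OF assms(3)] by (simp add: mult.assoc)
  ultimately show ?thesis
    by (metis less_irrefl nonzero_mult_div_cancel_right)
qed

lemma gauss_binomial_symmetric:
  fixes q :: real
  assumes "0 < q" "q < 1" "j \<le> N"
  shows "gauss_binomial q N (N - j) = gauss_binomial q N j"
  using assms by (simp add: gauss_binomial_eq_quotient mult.commute)

lemma q_binomial_theorem:
  "(\<Prod>i<N. 1 + w * q ^ Suc i) = (\<Sum>j\<le>N. gauss_binomial q N j * q ^ triangular j * w ^ j)"
proof (induction N)
  case 0
  then show ?case by simp
next
  case (Suc N)
  let ?S = "\<lambda>j. gauss_binomial q N j * q ^ triangular j * w ^ j"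
  have shift: "(\<Sum>j\<le>N. ?S j) = 1 + (\<Sum>j\<le>N. ?S (Suc j))"
  proof -
    have "(\<Sum>j\<le>Suc N. ?S j) = (\<Sum>j\<le>N. ?S j)"
      by (simp add: gauss_binomial_eq_0)
    moreover have "(\<Sum>j\<le>Suc N. ?S j) = 1 + (\<Sum>j\<le>N. ?S (Suc j))"
      by (subst sum.atMost_Suc_shift) simp
    ultimately show ?thesis by simp
  qed
  have pascal: "(\<Sum>j\<le>Suc N. gauss_binomial q (Suc N) j * q ^ triangular j * w ^ j)
      = 1 + (\<Sum>j\<le>N. ?S (Suc j))
          + (\<Sum>j\<le>N. q ^ (N - j) * gauss_binomial q N j * q ^ triangular (Suc j) * w ^ Suc j)"
    by (subst sum.atMost_Suc_shift) (simp add: sum.distrib algebra_simps)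
  have "q ^ (N - j) * q ^ triangular (Suc j) = q ^ triangular j * q ^ Suc N" if "j \<le> N" for j
  proof -
    have "N - j + triangular (Suc j) = triangular j + Suc N"
      using that by (simp add: triangular_Suc)
    then show ?thesis
      by (metis power_add)
  qed
  then have "(\<Sum>j\<le>N. q ^ (N - j) * gauss_binomial q N j * q ^ triangular (Suc j) * w ^ Suc j)
      = (\<Sum>j\<le>N. ?S j) * (w * q ^ Suc N)"
    unfolding sum_distrib_right by (intro sum.cong) (simp_all add: algebra_simps)
  then show ?case
    unfolding pascal prod.lessThan_Suc Suc.IH using shift by (simp add: algebra_simps)
qed

lemma prod_lessThan_add:
  fixes f :: "nat \<Rightarrow> 'a::comm_monoid_mult"
  shows "(\<Prod>i<n + m. f i) = (\<Prod>i<n. f i) * (\<Prod>i<m. f (n + i))"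
  by (induction m) (simp_all add: ac_simps)

lemma sum_atMost_add:
  fixes f :: "nat \<Rightarrow> 'a::comm_monoid_add"
  shows "(\<Sum>j\<le>n + m. f j) = (\<Sum>j<n. f j) + (\<Sum>k\<le>m. f (n + k))"
  by (induction m) (simp_all add: ac_simps flip: lessThan_Suc_atMost)

text \<open>Substituting \<open>w = x / q ^ n\<close> into the \<open>q\<close>-binomial theorem of order \<open>2 n\<close>: its first
  \<open>n\<close> factors are \<open>1 + x / q ^ i\<close>, \<open>i < n\<close>, and the remaining ones are \<open>1 + x * q ^ Suc i\<close>.\<close>

lemma jtp_finite_product_eq:
  fixes q x :: real
  assumes q: "q \<noteq> 0" and x: "x \<noteq> 0"
  shows "(\<Prod>i<n. (1 + q ^ i / x) * (1 + x * q ^ Suc i))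
    = (\<Prod>i<2 * n. 1 + x / q ^ n * q ^ Suc i) * (q ^ (\<Sum>i<n. i) / x ^ n)"
proof -
  define f where "f i = 1 + x / q ^ n * q ^ Suc i" for i
  have upper: "(\<Prod>i<n. f (n + i)) = (\<Prod>i<n. 1 + x * q ^ Suc i)"
    using q by (intro prod.cong) (simp_all add: f_def power_add)
  have "(\<Prod>i<n. f i) = (\<Prod>i<n. f (n - Suc i))"
    by (rule prod.nat_diff_reindex[symmetric])
  also have "\<dots> = (\<Prod>i<n. 1 + x / q ^ i)"
  proof (intro prod.cong refl)
    fix i
    assume "i \<in> {..<n}"
    then have "n = i + Suc (n - Suc i)"
      by simp
    then have "q ^ n = q ^ i * q ^ Suc (n - Suc i)"
      by (metis power_add)
    then show "f (n - Suc i) = 1 + x / q ^ i"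
      using q by (simp add: f_def field_simps)
  qed
  finally have "(\<Prod>i<n. f i) * (q ^ (\<Sum>i<n. i) / x ^ n) = (\<Prod>i<n. (1 + x / q ^ i) * (q ^ i / x))"
    by (simp add: prod.distrib prod_dividef power_sum)
  also have "\<dots> = (\<Prod>i<n. 1 + q ^ i / x)"
    using q x by (intro prod.cong) (simp_all add: field_simps)
  finally have lower: "(\<Prod>i<n. f i) * (q ^ (\<Sum>i<n. i) / x ^ n) = (\<Prod>i<n. 1 + q ^ i / x)" .
  show ?thesis
    unfolding mult_2 prod_lessThan_add prod.distrib f_def[symmetric] upper[symmetric] lower[symmetric]
    by (simp add: ac_simps)
qed

lemma jtp_term_nonneg_index:
  fixes q x :: real
  assumes "q \<noteq> 0" "x \<noteq> 0"
  shows "q ^ triangular (n + k) * (x / q ^ n) ^ (n + k) * (q ^ (\<Sum>i<n. i) / x ^ n)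
    = q ^ triangular k * x ^ k"
proof -
  have "2 * ((\<Sum>i<n. i) + triangular (n + k)) = 2 * (triangular k + n * (n + k))"
    using two_triangular[of n] two_triangular[of "n + k"] two_triangular[of k]
      sum_lessThan_plus_eq_triangular[of n]
    by (simp add: algebra_simps)
  then have "(\<Sum>i<n. i) + triangular (n + k) = triangular k + n * (n + k)"
    by simp
  then have exp: "q ^ triangular (n + k) * q ^ (\<Sum>i<n. i) = q ^ triangular k * q ^ (n * (n + k))"
    by (metis add.commute power_add)
  have "q ^ triangular (n + k) * (x / q ^ n) ^ (n + k) * (q ^ (\<Sum>i<n. i) / x ^ n)
      = (q ^ triangular (n + k) * q ^ (\<Sum>i<n. i)) * x ^ (n + k) / (q ^ (n * (n + k)) * x ^ n)"
    by (simp add: power_divide power_mult)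
  also have "\<dots> = q ^ triangular k * x ^ k"
    unfolding exp using assms by (simp add: power_add)
  finally show ?thesis .
qed

lemma jtp_term_neg_index:
  fixes q x :: real
  assumes "q \<noteq> 0" "x \<noteq> 0" "n = j + Suc i"
  shows "q ^ triangular j * (x / q ^ n) ^ j * (q ^ (\<Sum>i<n. i) / x ^ n)
    = q ^ triangular i * (1 / x) ^ Suc i"
proof -
  have "2 * ((\<Sum>i<n. i) + triangular j) = 2 * (triangular i + n * j)"
    using two_triangular[of n] two_triangular[of j] two_triangular[of i]
      sum_lessThan_plus_eq_triangular[of n] \<open>n = j + Suc i\<close>
    by (simp add: algebra_simps)
  then have "(\<Sum>i<n. i) + triangular j = triangular i + n * j"
    by simp
  then have exp: "q ^ triangular j * q ^ (\<Sum>i<n. i) = q ^ triangular i * q ^ (n * j)"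
    by (metis add.commute power_add)
  have "q ^ triangular j * (x / q ^ n) ^ j * (q ^ (\<Sum>i<n. i) / x ^ n)
      = (q ^ triangular j * q ^ (\<Sum>i<n. i)) * x ^ j / (q ^ (n * j) * x ^ n)"
    by (simp add: power_divide power_mult)
  also have "\<dots> = q ^ triangular i * (1 / x) ^ Suc i"
    unfolding exp using assms by (simp add: power_add power_one_over field_simps)
  finally show ?thesis .
qed

text \<open>The negative powers \<open>(1 / x) ^ Suc i\<close> come from the terms \<open>j = n - Suc i\<close> of the
  \<open>q\<close>-binomial expansion, reindexed by the symmetry of the Gaussian binomials.\<close>

lemma jacobi_triple_product_finite:
  fixes q x :: real
  assumes q: "0 < q" "q < 1" and x: "x \<noteq> 0"
  shows "(\<Prod>i<n. (1 + q ^ i / x) * (1 + x * q ^ Suc i))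
    = (\<Sum>k\<le>n. gauss_binomial q (2 * n) (n + k) * q ^ triangular k * x ^ k)
    + (\<Sum>i<n. gauss_binomial q (2 * n) (n + Suc i) * q ^ triangular i * (1 / x) ^ Suc i)"
proof -
  define C where "C = q ^ (\<Sum>i<n. i) / x ^ n"
  define F where "F j = gauss_binomial q (2 * n) j * q ^ triangular j * (x / q ^ n) ^ j" for j
  have q0: "q \<noteq> 0"
    using q by simp
  have "(\<Prod>i<n. (1 + q ^ i / x) * (1 + x * q ^ Suc i)) = (\<Sum>j\<le>n + n. F j) * C"
    unfolding jtp_finite_product_eq[OF q0 x] q_binomial_theorem F_def C_def mult_2 ..
  also have "\<dots> = (\<Sum>j<n. F j * C) + (\<Sum>k\<le>n. F (n + k) * C)"
    unfolding sum_atMost_add distrib_right sum_distrib_right ..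
  also have "(\<Sum>j<n. F j * C) = (\<Sum>i<n. F (n - Suc i) * C)"
    by (rule sum.nat_diff_reindex[symmetric])
  also have "(\<Sum>k\<le>n. F (n + k) * C)
      = (\<Sum>k\<le>n. gauss_binomial q (2 * n) (n + k) * q ^ triangular k * x ^ k)"
  proof (intro sum.cong refl)
    fix k
    show "F (n + k) * C = gauss_binomial q (2 * n) (n + k) * q ^ triangular k * x ^ k"
      using jtp_term_nonneg_index[OF q0 x, of n k] unfolding F_def C_def by (simp only: mult.assoc)
  qed
  also have "(\<Sum>i<n. F (n - Suc i) * C)
      = (\<Sum>i<n. gauss_binomial q (2 * n) (n + Suc i) * q ^ triangular i * (1 / x) ^ Suc i)"
  proof (intro sum.cong refl)
    fix i
    assume "i \<in> {..<n}"
    then have "gauss_binomial q (2 * n) (2 * n - (n + Suc i)) = gauss_binomial q (2 * n) (n + Suc i)"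
      using q by (intro gauss_binomial_symmetric) auto
    moreover have "2 * n - (n + Suc i) = n - Suc i"
      by simp
    ultimately have sym: "gauss_binomial q (2 * n) (n - Suc i) = gauss_binomial q (2 * n) (n + Suc i)"
      by simp
    have "n = (n - Suc i) + Suc i"
      using \<open>i \<in> {..<n}\<close> by simp
    from jtp_term_neg_index[OF q0 x this]
    show "F (n - Suc i) * C
        = gauss_binomial q (2 * n) (n + Suc i) * q ^ triangular i * (1 / x) ^ Suc i"
      unfolding F_def C_def sym by (simp only: mult.assoc)
  qed
  finally show ?thesis
    by simp
qed

lemma suminf_weighted_tendsto:
  fixes a :: "nat \<Rightarrow> real"
  assumes "summable (\<lambda>k. norm (a k))"
    and "\<And>n k. 0 \<le> W n k" "\<And>n k. W n k \<le> 1" "\<And>k. (\<lambda>n. W n k) \<longlonglongrightarrow> 1"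
  shows "(\<lambda>n. \<Sum>k. a k * W n k) \<longlonglongrightarrow> (\<Sum>k. a k)"
proof -
  have "(\<lambda>n. a k * W n k) \<longlonglongrightarrow> a k" for k
    using tendsto_mult[OF tendsto_const assms(4), of "a k" k] by simp
  moreover have "norm (a k * W n k) \<le> norm (a k)" for k n
    using assms(2,3)[of n k] by (simp add: abs_mult mult_left_le)
  then have "\<forall>\<^sub>F (k, n) in at_top \<times>\<^sub>F sequentially. norm (a k * W n k) \<le> norm (a k)"
    by (intro always_eventually) auto
  ultimately show ?thesis
    using tannerys_theorem[of "\<lambda>k n. a k * W n k"] assms(1) by simp
qed

lemma central_gauss_binomial_weight_bounds:
  fixes q L :: real
  assumes q: "0 < q" "q < 1" and L: "0 < L" "\<And>n. L \<le> q_pochhammer q n"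
  shows "0 \<le> L * gauss_binomial q (2 * n) (n + k)" "L * gauss_binomial q (2 * n) (n + k) \<le> 1"
proof -
  have "0 \<le> L * gauss_binomial q (2 * n) (n + k) \<and> L * gauss_binomial q (2 * n) (n + k) \<le> 1"
  proof (cases "k \<le> n")
    case True
    have pos: "0 < q_pochhammer q (2 * n)" "0 < q_pochhammer q (n + k)" "0 < q_pochhammer q (n - k)"
      using q_pochhammer_pos[OF q] by auto
    have "q_pochhammer q (2 * n) \<le> q_pochhammer q (n + k)"
      using True by (intro q_pochhammer_antimono[OF q]) auto
    then have A: "0 \<le> q_pochhammer q (2 * n) / q_pochhammer q (n + k)"
        "q_pochhammer q (2 * n) / q_pochhammer q (n + k) \<le> 1"
      using pos by simp_all
    have B: "0 \<le> L / q_pochhammer q (n - k)" "L / q_pochhammer q (n - k) \<le> 1"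
      using pos L by simp_all
    have "L * gauss_binomial q (2 * n) (n + k)
        = (q_pochhammer q (2 * n) / q_pochhammer q (n + k)) * (L / q_pochhammer q (n - k))"
      using True by (simp add: gauss_binomial_eq_quotient[OF q])
    then show ?thesis
      using A B by (metis mult_le_one mult_nonneg_nonneg)
  qed (simp add: gauss_binomial_eq_0)
  then show "0 \<le> L * gauss_binomial q (2 * n) (n + k)" "L * gauss_binomial q (2 * n) (n + k) \<le> 1"
    by auto
qed

lemma central_gauss_binomial_weight_tendsto:
  fixes q L :: real
  assumes q: "0 < q" "q < 1" and lim: "q_pochhammer q \<longlonglongrightarrow> L" and L: "0 < L"
  shows "(\<lambda>n. L * gauss_binomial q (2 * n) (n + k)) \<longlonglongrightarrow> 1"
proof -
  have "(\<lambda>n. q_pochhammer q (2 * n)) \<longlonglongrightarrow> L"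
    using filterlim_compose[OF lim mult_nat_left_at_top[of 2]] by simp
  moreover have "(\<lambda>n. q_pochhammer q (n + k)) \<longlonglongrightarrow> L"
    by (rule LIMSEQ_ignore_initial_segment[OF lim])
  moreover have "(\<lambda>n. q_pochhammer q (n - k)) \<longlonglongrightarrow> L"
    by (rule filterlim_compose[OF lim filterlim_minus_const_nat_at_top])
  ultimately have "(\<lambda>n. L * (q_pochhammer q (2 * n) / (q_pochhammer q (n + k) * q_pochhammer q (n - k))))
      \<longlonglongrightarrow> L * (L / (L * L))"
    using L by (intro tendsto_intros) auto
  then have "(\<lambda>n. L * (q_pochhammer q (2 * n) / (q_pochhammer q (n + k) * q_pochhammer q (n - k))))
      \<longlonglongrightarrow> 1"
    using L by simp
  moreover have "\<forall>\<^sub>F n in sequentially.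
      L * (q_pochhammer q (2 * n) / (q_pochhammer q (n + k) * q_pochhammer q (n - k)))
      = L * gauss_binomial q (2 * n) (n + k)"
    using eventually_ge_at_top[of k] by eventually_elim (simp add: gauss_binomial_eq_quotient[OF q])
  ultimately show ?thesis
    by (rule Lim_transform_eventually)
qed

text \<open>With \<open>L = (q; q)\<^sub>\<infinity>\<close> the weights \<open>L * gauss_binomial q (2 * n) (n + k)\<close> lie in \<open>[0, 1]\<close> and
  tend to \<open>1\<close>, so Tannery's theorem passes to the limit in the finite identity term by term.\<close>

lemma jacobi_triple_product_scaled:
  fixes q x L :: real
  assumes q: "0 < q" "q < 1" and x: "x \<noteq> 0"
    and lim: "q_pochhammer q \<longlonglongrightarrow> L" and L: "0 < L" "\<And>n. L \<le> q_pochhammer q n"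
  shows "(\<lambda>n. L * (\<Prod>i<n. (1 + q ^ i / x) * (1 + x * q ^ Suc i)))
    \<longlonglongrightarrow> theta q x + theta q (1 / x) / x"
proof -
  define W where "W n k = L * gauss_binomial q (2 * n) (n + k)" for n k
  define a where "a k = q ^ triangular k * x ^ k" for k
  define b where "b i = q ^ triangular i * (1 / x) ^ Suc i" for i
  have W: "0 \<le> W n k" "W n k \<le> 1" "(\<lambda>n. W n k) \<longlonglongrightarrow> 1" for n k
    unfolding W_def using central_gauss_binomial_weight_bounds[OF q L]
      central_gauss_binomial_weight_tendsto[OF q lim L(1)] by auto
  have W_0: "W n k = 0" if "n < k" for n k
    using that by (simp add: W_def gauss_binomial_eq_0)
  have "summable (\<lambda>i. norm (1 / x) * norm (q ^ triangular i * (1 / x) ^ i))"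
    by (intro summable_mult summable_norm_theta_terms[OF q])
  then have sum_b: "summable (\<lambda>i. norm (b i))"
    by (simp add: b_def abs_mult mult_ac)
  have "(\<lambda>n. (\<Sum>k. a k * W n k) + (\<Sum>i. b i * W n (Suc i))) \<longlonglongrightarrow> (\<Sum>k. a k) + (\<Sum>i. b i)"
    using W summable_norm_theta_terms[OF q, of x]
    by (intro tendsto_add suminf_weighted_tendsto sum_b) (simp_all add: a_def)
  moreover have "(\<Sum>k. a k * W n k) + (\<Sum>i. b i * W n (Suc i))
      = L * (\<Prod>i<n. (1 + q ^ i / x) * (1 + x * q ^ Suc i))" for n
  proof -
    have "(\<Sum>k. a k * W n k) = (\<Sum>k\<le>n. a k * W n k)" "(\<Sum>i. b i * W n (Suc i)) = (\<Sum>i<n. b i * W n (Suc i))"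
      by (intro suminf_finite; simp add: W_0)+
    moreover have "L * (\<Prod>i<n. (1 + q ^ i / x) * (1 + x * q ^ Suc i))
        = (\<Sum>k\<le>n. a k * W n k) + (\<Sum>i<n. b i * W n (Suc i))"
      by (subst jacobi_triple_product_finite[OF q x])
        (simp add: a_def b_def W_def distrib_left sum_distrib_left mult_ac)
    ultimately show ?thesis
      by simp
  qed
  moreover have "(\<Sum>k. a k) + (\<Sum>i. b i) = theta q x + theta q (1 / x) / x"
  proof -
    have "(\<Sum>i. b i) = (1 / x) * theta q (1 / x)"
      unfolding theta_eq_suminf b_def
      using suminf_mult[OF summable_theta_terms[OF q], of "1 / x" "1 / x"] by (simp add: mult_ac)
    then show ?thesis
      by (simp add: a_def theta_eq_suminf)
  qed
  ultimately show ?thesis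
    by simp
qed

lemma jacobi_triple_product:
  fixes q x :: real
  assumes q: "0 < q" "q < 1" and x: "x \<noteq> 0"
  shows "(\<lambda>n. q_pochhammer q n * (\<Prod>i<n. (1 + q ^ i / x) * (1 + x * q ^ Suc i)))
    \<longlonglongrightarrow> theta q x + theta q (1 / x) / x"
proof -
  obtain L where lim: "q_pochhammer q \<longlonglongrightarrow> L" and L: "0 < L" "\<And>n. L \<le> q_pochhammer q n"
    using q_pochhammer_tendsto_pos[OF q] by blast
  have "(\<lambda>n. q_pochhammer q n / L * (L * (\<Prod>i<n. (1 + q ^ i / x) * (1 + x * q ^ Suc i))))
      \<longlonglongrightarrow> L / L * (theta q x + theta q (1 / x) / x)"
    using L(1) by (intro tendsto_intros lim jacobi_triple_product_scaled[OF q x lim L]) auto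
  then show ?thesis
    using L by simp
qed

section \<open>The triple product bound for \<open>q y > 1\<close>\<close>

text \<open>\<open>jtp_partial q y n\<close> is the modulus of the \<open>n\<close>-th partial product in the Jacobi triple
  product for \<open>theta q (-y) - theta q (-(1 / y)) / y\<close>.\<close>

definition jtp_factor :: "real \<Rightarrow> real \<Rightarrow> nat \<Rightarrow> real" where
  "jtp_factor q y i = (1 - q ^ Suc i) * (1 - q ^ i / y) * \<bar>1 - y * q ^ Suc i\<bar>"

definition jtp_partial :: "real \<Rightarrow> real \<Rightarrow> nat \<Rightarrow> real" where
  "jtp_partial q y n = (\<Prod>i<n. jtp_factor q y i)"

lemma jtp_factor_bounds:
  fixes q y :: real
  assumes q: "0 < q" "q < 1" and y: "1 \<le> y" "y \<le> 5"
  shows "0 \<le> jtp_factor q y i" "jtp_factor q y i \<le> 1"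
    and "1/5 \<le> q ^ Suc i \<Longrightarrow> jtp_factor q y i \<le> 4/5"
proof -
  define w where "w = q ^ Suc i"
  have w: "0 < w" "w < 1"
    unfolding w_def using q power_Suc_less_one[OF q, of i] by simp_all
  have "0 < q ^ i" "q ^ i \<le> 1"
    using q by (simp_all add: power_le_one)
  then have y_factor: "0 \<le> 1 - q ^ i / y" "1 - q ^ i / y \<le> 1"
    using y by (simp_all add: divide_le_eq_1)
  have w_factor_cases: "(1 - w) * \<bar>1 - y * w\<bar> \<le> 1 - w \<or> (1 - w) * \<bar>1 - y * w\<bar> \<le> 4/5"
  proof (cases "y * w \<le> 2")
    case True
    then have "\<bar>1 - y * w\<bar> \<le> 1"
      using w y by (simp add: abs_le_iff)
    then have "(1 - w) * \<bar>1 - y * w\<bar> \<le> (1 - w) * 1"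
      using w by (intro mult_left_mono) auto
    then show ?thesis
      by simp
  next
    case False
    \<comment> \<open>here \<open>\<bar>1 - y w\<bar> \<le> 5 w - 1\<close>, and \<open>(1 - w) (5 w - 1)\<close> is maximal at \<open>w = 3/5\<close>\<close>
    have "(1 - w) * \<bar>1 - y * w\<bar> \<le> (1 - w) * (5 * w - 1)"
      using False y w by (intro mult_left_mono) (auto simp: mult_right_mono)
    also have "\<dots> \<le> 4/5"
      using zero_le_power2[of "w - 3/5"] by (simp add: power2_eq_square algebra_simps)
    finally show ?thesis ..
  qed
  then have w_factor: "(1 - w) * \<bar>1 - y * w\<bar> \<le> 1" "1/5 \<le> w \<Longrightarrow> (1 - w) * \<bar>1 - y * w\<bar> \<le> 4/5"
    using w by linarith+
  have eq: "jtp_factor q y i = (1 - q ^ i / y) * ((1 - w) * \<bar>1 - y * w\<bar>)"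
    unfolding jtp_factor_def w_def by (simp add: algebra_simps)
  show "0 \<le> jtp_factor q y i"
    unfolding eq using y_factor w by simp
  show "jtp_factor q y i \<le> 1"
    unfolding eq using mult_mono[OF y_factor(2) w_factor(1)] y_factor w by simp
  show "jtp_factor q y i \<le> 4/5" if "1/5 \<le> q ^ Suc i"
    unfolding eq using mult_mono[OF y_factor(2) w_factor(2)] y_factor w that by (simp add: w_def)
qed

lemma jtp_partial_nonneg:
  assumes "0 < q" "q < 1" "1 \<le> y" "y \<le> 5"
  shows "0 \<le> jtp_partial q y n"
  unfolding jtp_partial_def using jtp_factor_bounds(1)[OF assms] by (intro prod_nonneg) auto

lemma jtp_partial_antimono:
  assumes "0 < q" "q < 1" "1 \<le> y" "y \<le> 5" and "N \<le> n"
  shows "jtp_partial q y n \<le> jtp_partial q y N"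
  using \<open>N \<le> n\<close>
proof (induction n rule: dec_induct)
  case (step n)
  have "jtp_partial q y n * jtp_factor q y n \<le> jtp_partial q y n"
    using jtp_partial_nonneg[OF assms(1-4)] jtp_factor_bounds(2)[OF assms(1-4)]
    by (simp add: mult_left_le)
  then show ?case
    using step by (simp add: jtp_partial_def)
qed simp

lemma theta_reflection_gap_le_jtp_partial:
  fixes q y :: real
  assumes q: "0 < q" "q < 1" and y: "1 \<le> y" "y \<le> 5"
  shows "\<bar>theta q (-y) - theta q (-(1 / y)) / y\<bar> \<le> jtp_partial q y N"
proof -
  define P where "P n = q_pochhammer q n * (\<Prod>i<n. (1 + q ^ i / (-y)) * (1 + (-y) * q ^ Suc i))" for n
  have "P \<longlonglongrightarrow> theta q (-y) + theta q (1 / (-y)) / (-y)"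
    unfolding P_def using y by (intro jacobi_triple_product[OF q]) auto
  then have lim: "(\<lambda>n. \<bar>P n\<bar>) \<longlonglongrightarrow> \<bar>theta q (-y) - theta q (-(1 / y)) / y\<bar>"
    by (auto dest: tendsto_rabs)
  have "\<bar>P n\<bar> = jtp_partial q y n" for n
  proof -
    have "\<bar>(1 - q ^ Suc i) * ((1 + q ^ i / (-y)) * (1 + (-y) * q ^ Suc i))\<bar> = jtp_factor q y i" for i
    proof -
      have "q ^ Suc i \<le> 1" "q ^ i \<le> 1"
        using q less_imp_le power_le_one by blast+
      moreover from this(2) have "0 \<le> 1 - q ^ i / y"
        using y by (simp add: divide_le_eq_1)
      ultimately show ?thesis
        by (simp add: jtp_factor_def abs_mult)
    qed
    then show ?thesis
      unfolding P_def q_pochhammer_def jtp_partial_def prod.distrib[symmetric] abs_prod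
      by (intro prod.cong) simp_all
  qed
  then have "\<forall>\<^sub>F n in sequentially. \<bar>P n\<bar> \<le> jtp_partial q y N"
    by (intro eventually_sequentiallyI[of N]) (simp add: jtp_partial_antimono[OF q y])
  with lim show ?thesis
    by (rule tendsto_upperbound) simp
qed

lemma theta_minus_pos_if_jtp_partial_less:
  fixes q y :: real
  assumes q: "0 < q" "q < 1" and y: "1 \<le> y" "y \<le> 5"
    and less: "jtp_partial q y N < (1 - q / y) / y"
  shows "0 < theta q (-y)"
proof -
  have "(1 - q / y) / y \<le> theta q (-(1 / y)) / y"
    using theta_minus_inverse_ge[OF q y(1)] y by (simp add: divide_right_mono)
  then show ?thesis
    using theta_reflection_gap_le_jtp_partial[OF q y, of N] less by linarith
qed

section \<open>A certified covering of \<open>1/5 \<le> q \<le> 9/10\<close>\<close>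

definition jtp_factor_upper :: "real \<Rightarrow> real \<Rightarrow> real \<Rightarrow> real \<Rightarrow> nat \<Rightarrow> real" where
  "jtp_factor_upper q1 q2 y1 y2 i =
     (1 - q1 ^ Suc i) * (1 - q1 ^ i / y2) * max (1 - y1 * q1 ^ Suc i) (y2 * q2 ^ Suc i - 1)"

lemma jtp_factor_le_upper:
  fixes q y :: real
  assumes q: "0 < q1" "q1 \<le> q" "q \<le> q2" "q < 1" and y: "0 \<le> y1" "y1 \<le> y" "y \<le> y2" "1 \<le> y"
  shows "jtp_factor q y i \<le> jtp_factor_upper q1 q2 y1 y2 i"
proof -
  have "0 \<le> q1" "q1 \<le> q" "0 \<le> q" "q \<le> 1"
    using q by auto
  then have "q1 ^ Suc i \<le> q ^ Suc i" "q1 ^ i \<le> q ^ i" "q ^ Suc i \<le> 1" "q ^ i \<le> 1"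
    by (simp_all only: power_mono power_le_one)
  then have q_factor: "0 \<le> 1 - q ^ Suc i" "1 - q ^ Suc i \<le> 1 - q1 ^ Suc i"
    by auto
  from \<open>q1 ^ i \<le> q ^ i\<close> \<open>q ^ i \<le> 1\<close> have y_factor: "0 \<le> 1 - q ^ i / y" "1 - q ^ i / y \<le> 1 - q1 ^ i / y2"
    using q y by (auto simp: divide_le_eq_1 intro!: frac_le)
  have "y1 * q1 ^ Suc i \<le> y * q ^ Suc i" "y * q ^ Suc i \<le> y2 * q2 ^ Suc i"
    using q y by (auto intro!: mult_mono power_mono)
  then have abs_factor: "\<bar>1 - y * q ^ Suc i\<bar> \<le> max (1 - y1 * q1 ^ Suc i) (y2 * q2 ^ Suc i - 1)"
    by (simp add: abs_le_iff max_def)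
  show ?thesis
    unfolding jtp_factor_def jtp_factor_upper_def
    using q_factor y_factor by (intro mult_mono abs_factor) auto
qed

lemma min_endpoints_le_concave_quadratic:
  fixes a b c z :: real
  assumes "a \<le> z" "z \<le> b" "0 \<le> c"
  shows "min (a - c * a\<^sup>2) (b - c * b\<^sup>2) \<le> z - c * z\<^sup>2"
proof (cases "c * (z + a) \<le> 1")
  case True
  have "z - c * z\<^sup>2 - (a - c * a\<^sup>2) = (z - a) * (1 - c * (z + a))"
    by (simp add: power2_eq_square algebra_simps)
  also have "\<dots> \<ge> 0"
    using True assms by simp
  finally show ?thesis
    by simp
next
  case False
  then have "1 \<le> c * (z + b)"
    using assms by (smt (verit) mult_left_mono)
  have "z - c * z\<^sup>2 - (b - c * b\<^sup>2) = (b - z) * (c * (z + b) - 1)"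
    by (simp add: power2_eq_square algebra_simps)
  also have "\<dots> \<ge> 0"
    using \<open>1 \<le> c * (z + b)\<close> assms by simp
  finally show ?thesis
    by simp
qed

lemma min_endpoints_le_reciprocal_quadratic:
  fixes q y :: real
  assumes "0 \<le> q" "q \<le> q2" "0 < y1" "y1 \<le> y" "y \<le> y2"
  shows "min ((1 - q2 / y1) / y1) ((1 - q2 / y2) / y2) \<le> (1 - q / y) / y"
proof -
  have "0 < y" "0 < y2"
    using assms by auto
  then have "min (1 / y2 - q2 * (1 / y2)\<^sup>2) (1 / y1 - q2 * (1 / y1)\<^sup>2) \<le> 1 / y - q2 * (1 / y)\<^sup>2"
    using assms by (intro min_endpoints_le_concave_quadratic) (auto simp: frac_le)
  moreover have "1 / y - q2 * (1 / y)\<^sup>2 \<le> 1 / y - q * (1 / y)\<^sup>2"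
    using assms by (simp add: mult_right_mono)
  moreover have "(1 - p / t) / t = 1 / t - p * (1 / t)\<^sup>2" for p t :: real
    by (simp add: power2_eq_square diff_divide_distrib)
  ultimately show ?thesis
    by (metis min.commute order_trans)
qed

text \<open>A box \<open>[q1, q2] \<times> [y1, y2]\<close> is certified by a partial product of the factor-wise upper
  bounds that stays below the minimum of \<open>(1 - q / y) / y\<close> over the box, which is attained at
  \<open>q = q2\<close> and \<open>y \<in> {y1, y2}\<close>.\<close>

definition box_certified :: "real \<Rightarrow> real \<Rightarrow> real \<Rightarrow> real \<Rightarrow> nat \<Rightarrow> bool" where
  "box_certified q1 q2 y1 y2 N \<longleftrightarrow> 0 < q1 \<and> 0 < y1 \<and>
     (\<Prod>i<N. jtp_factor_upper q1 q2 y1 y2 i) < min ((1 - q2 / y1) / y1) ((1 - q2 / y2) / y2)"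

lemma theta_minus_pos_if_box_certified:
  fixes q y :: real
  assumes box: "box_certified q1 q2 y1 y2 N"
    and q: "q1 \<le> q" "q \<le> q2" "q < 1" and y: "y1 \<le> y" "y \<le> y2" "1 \<le> y" "y \<le> 5"
  shows "0 < theta q (-y)"
proof -
  have pos: "0 < q1" "0 < y1"
    using box by (simp_all add: box_certified_def)
  then have "0 < q"
    using q by linarith
  have "jtp_partial q y N \<le> (\<Prod>i<N. jtp_factor_upper q1 q2 y1 y2 i)"
    unfolding jtp_partial_def using pos q y \<open>0 < q\<close>
    by (intro prod_mono conjI jtp_factor_bounds(1) jtp_factor_le_upper) auto
  also have "\<dots> < min ((1 - q2 / y1) / y1) ((1 - q2 / y2) / y2)"
    using box by (simp add: box_certified_def)
  also have "\<dots> \<le> (1 - q / y) / y"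
    using pos q y \<open>0 < q\<close> by (intro min_endpoints_le_reciprocal_quadratic) auto
  finally show ?thesis
    using \<open>0 < q\<close> q y by (intro theta_minus_pos_if_jtp_partial_less) auto
qed

text \<open>A strip \<open>[q1, q2] \<times> [y1, 5]\<close> is certified by consecutive boxes, listed by their upper
  \<open>y\<close>-bound and the number of factors used.\<close>

fun y_cover_certified :: "real \<Rightarrow> real \<Rightarrow> real \<Rightarrow> (real \<times> nat) list \<Rightarrow> bool" where
  "y_cover_certified q1 q2 y1 [] \<longleftrightarrow> False"
| "y_cover_certified q1 q2 y1 ((y2, N) # boxes) \<longleftrightarrow>
     box_certified q1 q2 y1 y2 N \<and> (5 \<le> y2 \<or> y_cover_certified q1 q2 y2 boxes)"

lemma theta_minus_pos_if_y_cover_certified: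
  fixes q y :: real
  assumes "y_cover_certified q1 q2 y1 boxes"
    and q: "q1 \<le> q" "q \<le> q2" "q < 1" and y: "y1 \<le> y" "1 \<le> y" "y \<le> 5"
  shows "0 < theta q (-y)"
  using assms(1) \<open>y1 \<le> y\<close>
proof (induction boxes arbitrary: y1)
  case (Cons box boxes)
  obtain y2 N where box: "box = (y2, N)"
    by fastforce
  show ?case
  proof (cases "y \<le> y2")
    case True
    then show ?thesis
      using Cons.prems box q y by (auto intro: theta_minus_pos_if_box_certified)
  next
    case False
    then show ?thesis
      using Cons box y by auto
  qed
qed simp

text \<open>The \<open>q\<close>-range \<open>[q1, qmax]\<close> is certified by consecutive strips, listed by their upper
  \<open>q\<close>-bound; on the strip ending at \<open>q2\<close> only \<open>y \<ge> 1 / q2\<close> matters, since \<open>q y > 1\<close>.\<close>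

fun q_cover_certified :: "real \<Rightarrow> real \<Rightarrow> (real \<times> (real \<times> nat) list) list \<Rightarrow> bool" where
  "q_cover_certified q1 qmax [] \<longleftrightarrow> False"
| "q_cover_certified q1 qmax ((q2, boxes) # strips) \<longleftrightarrow>
     y_cover_certified q1 q2 (1 / q2) boxes \<and> (qmax \<le> q2 \<or> q_cover_certified q2 qmax strips)"

lemma theta_minus_pos_if_q_cover_certified:
  fixes q y :: real
  assumes "q_cover_certified q1 qmax strips"
    and q: "0 < q" "q1 \<le> q" "q \<le> qmax" "q < 1" and y: "1 < q * y" "y \<le> 5"
  shows "0 < theta q (-y)"
  using assms(1) \<open>q1 \<le> q\<close>
proof (induction strips arbitrary: q1)
  case (Cons strip strips)
  obtain q2 boxes where strip: "strip = (q2, boxes)"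
    by fastforce
  show ?case
  proof (cases "q \<le> q2")
    case True
    have "1 / q < y" "1 < 1 / q" "1 / q2 \<le> 1 / q"
      using q y True by (simp_all add: field_simps frac_le)
    then have "1 / q2 \<le> y" "1 \<le> y"
      by linarith+
    moreover have "y_cover_certified q1 q2 (1 / q2) boxes"
      using Cons.prems(1) strip by simp
    ultimately show ?thesis
      using theta_minus_pos_if_y_cover_certified Cons.prems(2) True q(4) y(2) by blast
  next
    case False
    then show ?thesis
      using Cons strip q by auto
  qed
qed simp

definition theta_certificate :: "(real \<times> (real \<times> nat) list) list" where
  "theta_certificate =
    [(1/4, [(5, 1)]),
     (3/10, [(41/10, 1), (5, 3)]),
     (7/20, [(39/10, 1), (22/5, 2), (5, 3)]),
     (2/5, [(37/10, 1), (5, 3)]),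
     (9/20, [(18/5, 2), (5, 3)]),
     (1/2, [(5, 4)]),
     (11/20, [(5, 3)]),
     (3/5, [(5, 4)]),
     (13/20, [(5, 4)]),
     (7/10, [(5, 4)]),
     (3/4, [(5, 4)]),
     (4/5, [(5, 5)]),
     (17/20, [(5, 6)]),
     (9/10, [(5, 8)])]"

lemma q_cover_certified_theta_certificate: "q_cover_certified (1/5) (9/10) theta_certificate"
  by (simp add: theta_certificate_def box_certified_def jtp_factor_upper_def lessThan_nat_numeral
      max_def min_def power_divide)

lemma theta_minus_pos_moderate:
  fixes q y :: real
  assumes "1/5 \<le> q" "q \<le> 9/10" "1 < q * y" "y \<le> 5"
  shows "0 < theta q (-y)"
  using theta_minus_pos_if_q_cover_certified[OF q_cover_certified_theta_certificate] assms by simp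

section \<open>The range \<open>q \<ge> 9/10\<close>\<close>

lemma power_crosses_below:
  fixes q c :: real
  assumes "0 < q" "q < 1" "0 < c" "c \<le> 1"
  obtains n where "c \<le> q ^ n" "q ^ Suc n < c"
proof -
  have ex: "\<exists>m. q ^ m < c"
    using assms by (intro real_arch_pow_inv) auto
  define m where "m = (LEAST m. q ^ m < c)"
  have "q ^ m < c"
    unfolding m_def by (rule LeastI_ex[OF ex])
  moreover have "m \<noteq> 0"
    using \<open>q ^ m < c\<close> assms by (cases m) auto
  then obtain n where "m = Suc n"
    using not0_implies_Suc by blast
  moreover have "c \<le> q ^ n"
    using not_less_Least[of n "\<lambda>m. q ^ m < c"] \<open>m = Suc n\<close> unfolding m_def by simp
  ultimately show ?thesis
    using that by blast
qed

lemma jtp_partial_le_four_fifths_power: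
  fixes q y :: real
  assumes qy: "0 < q" "q < 1" "1 \<le> y" "y \<le> 5" and "1/5 \<le> q ^ n"
  shows "jtp_partial q y n \<le> (4/5) ^ n"
proof -
  have "jtp_partial q y n \<le> (\<Prod>i<n. 4/5)"
    unfolding jtp_partial_def
  proof (intro prod_mono conjI)
    fix i
    assume "i \<in> {..<n}"
    then have "q ^ n \<le> q ^ Suc i"
      using qy by (intro power_decreasing) auto
    then have "1/5 \<le> q ^ Suc i"
      using \<open>1/5 \<le> q ^ n\<close> by linarith
    then show "0 \<le> jtp_factor q y i" "jtp_factor q y i \<le> 4/5"
      using jtp_factor_bounds(1,3)[OF qy] by blast+
  qed
  then show ?thesis
    by simp
qed

lemma Suc_times_four_fifths_power_less:
  assumes "15 \<le> n"
  shows "(real n + 1) * (4/5) ^ n < 4/5"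
  using assms
proof (induction n rule: dec_induct)
  case base
  then show ?case
    by (simp add: power_divide)
next
  case (step n)
  have "(real (Suc n) + 1) * (4/5) ^ Suc n = (real n + 2) * (4/5) * (4/5) ^ n"
    by simp
  also have "\<dots> \<le> (real n + 1) * (4/5) ^ n"
    using step(1) by (intro mult_right_mono) auto
  also have "\<dots> < 4/5"
    by (rule step.IH)
  finally show ?case .
qed

text \<open>For \<open>q \<ge> 9/10\<close> take the \<open>n\<close> with \<open>q ^ n \<ge> 1/5 > q ^ Suc n\<close>: the first \<open>n\<close> factors are
  at most \<open>4/5\<close>, while by Bernoulli's inequality \<open>n\<close> is large compared to \<open>1 / (1 - q)\<close>.\<close>

lemma four_fifths_power_less_one_minus:
  fixes q :: real
  assumes q: "9/10 \<le> q" "q < 1" and n: "q ^ Suc n < 1/5"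
  shows "15 \<le> n" "(4/5) ^ n < 1 - q"
proof -
  show "15 \<le> n"
  proof (rule ccontr)
    assume "\<not> 15 \<le> n"
    then have "q ^ 15 \<le> q ^ Suc n"
      using q by (intro power_decreasing) auto
    moreover have "(9/10::real) ^ 15 \<le> q ^ 15"
      using q by (intro power_mono) auto
    ultimately show False
      using n by (simp add: power_divide)
  qed
  have "1 + real (Suc n) * (q - 1) \<le> q ^ Suc n"
    using Bernoulli_inequality[of "q - 1" "Suc n"] q by simp
  then have "4/5 < (real n + 1) * (1 - q)"
    using n by (simp add: algebra_simps)
  then have "(real n + 1) * (4/5) ^ n < (real n + 1) * (1 - q)"
    using Suc_times_four_fifths_power_less[OF \<open>15 \<le> n\<close>] by linarith
  then show "(4/5) ^ n < 1 - q"
    by (simp add: mult_less_cancel_left_pos)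
qed

lemma theta_minus_pos_near_one:
  fixes q y :: real
  assumes q: "9/10 \<le> q" "q < 1" and y: "1 < q * y" "y \<le> 5"
  shows "0 < theta q (-y)"
proof -
  have "0 < q"
    using q by simp
  then have "1 / q < y" "1 < 1 / q"
    using q y by (simp_all add: field_simps)
  then have qy: "0 < q" "q < 1" "1 \<le> y" "y \<le> 5"
    using \<open>0 < q\<close> q y by linarith+
  obtain n where n: "1/5 \<le> q ^ n" "q ^ Suc n < 1/5"
    using power_crosses_below[of q "1/5"] qy by auto
  note power_n = four_fifths_power_less_one_minus[OF q n(2)]
  have "1 - q \<le> (1 - q / (1 / q)) / (1 / q)"
  proof -
    have "(9/10) * (1 + 9/10) \<le> q * (1 + q)"
      using q by (intro mult_mono) auto
    then have "(1 - q) * 1 \<le> (1 - q) * (q * (1 + q))"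
      using q by (intro mult_left_mono) auto
    then show ?thesis
      by (simp add: algebra_simps power2_eq_square)
  qed
  moreover have "(4/5::real) ^ n \<le> (4/5) ^ 15"
    using power_n(1) by (intro power_decreasing) auto
  moreover have "(4/5::real) ^ 15 < 4/25" "4/25 \<le> (1 - q / 5) / 5"
    using q by (simp_all add: power_divide)
  ultimately have "(4/5) ^ n < (1 - q / (1 / q)) / (1 / q)" "(4/5) ^ n < (1 - q / 5) / 5"
    using power_n(2) by linarith+
  then have "(4/5) ^ n < min ((1 - q / (1 / q)) / (1 / q)) ((1 - q / 5) / 5)"
    by simp
  also have "\<dots> \<le> (1 - q / y) / y"
    using \<open>1 / q < y\<close> qy by (intro min_endpoints_le_reciprocal_quadratic) auto
  finally show ?thesis
    using jtp_partial_le_four_fifths_power[OF qy n(1)]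
    by (intro theta_minus_pos_if_jtp_partial_less[OF qy, of n]) simp
qed

theorem proposition1:
  fixes q x :: real
  assumes "0 < q" and "q < 1" and "x \<ge> -5"
  shows "theta q x \<noteq> 0"
proof (cases "0 \<le> x")
  case True
  then show ?thesis
    using theta_ge_one[OF assms(1,2)] by fastforce
next
  case False
  define y where "y = -x"
  have y: "0 < y" "y \<le> 5"
    using False assms(3) by (simp_all add: y_def)
  have "0 < theta q (-y)"
  proof (cases "q * y \<le> 1")
    case True
    then show ?thesis
      using theta_minus_pos_if_small assms y by simp
  next
    case False
    have "q * y \<le> q * 5"
      using assms y by simp
    then show ?thesis
      using False assms y theta_minus_pos_moderate[of q y] theta_minus_pos_near_one[of q y] by linarith
  qed
  then show ?thesis
    by (simp add: y_def)
qed

end
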